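(* Let $\Omega$ be a convex domain in $\mathbb{R}^n$, let $\tau$ be a smooth symmetric $(0,2)$-tensor field on $\Omega$, and let $x_0\neq y_0$ be points of $\Omega$. Let $e_1,\dots,e_n$ be an orthonormal frame of $\mathbb{R}^n$ with $e_n=N(x_0,y_0)$, and let $\tilde E_i=(e_i,-e_i)\in\mathbb{R}^n\times\mathbb{R}^n$ for $i=1,\dots,n$. Then $$\nabla_{\tilde E_i}E_\tau(x_0,y_0)=E_{\nabla_{e_i}\tau}(x_0,y_0)-\frac{2}{r(x_0,y_0)}\int_0^{r(x_0,y_0)}(s\,\tau_{nn;i}+2\tau_{in})(\theta(s,x_0,y_0))\,ds\quad\text{for } i<n,$$ and $$\nabla_{\tilde E_n}E_\tau(x_0,y_0)=E_{\nabla_{e_n}\tau}(x_0,y_0)-2\tau_{nn}(y_0).$$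
   Context: For $x,y\in\mathbb{R}^n$ let $r(x,y)=\|x-y\|$, and for $x\neq y$ let $N(x,y)=\frac{y-x}{\|y-x\|}$ and $\theta(s,x,y)=x+sN(x,y)$. For a symmetric $(0,2)$-tensor field $\tau$ on $\Omega$, $E_\tau(x,y)=\int_0^{r(x,y)}\tau(\theta(s,x,y))(N(x,y),N(x,y))\,ds$, viewed as a function of $(x,y)\in\Omega\times\Omega$; $\nabla_{V}$ for $V\in\mathbb{R}^n\times\mathbb{R}^n$ denotes the directional derivative of a function of $(x,y)$ in direction $V$. Components are taken in the frame $e_1,\dots,e_n$: $\tau_{ij}=\tau(e_i,e_j)$ and $\tau_{ij;k}=(\nabla_{e_k}\tau)(e_i,e_j)$; $\nabla_{e_i}\tau$ is the covariant derivative of $\tau$ in direction $e_i$. *)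

theory Defs
  imports "HOL-Analysis.Analysis"
begin

coinductive smooth_on :: "'a::euclidean_space set \<Rightarrow> ('a \<Rightarrow> real) \<Rightarrow> bool" where
  "(\<forall>x\<in>S. f differentiable (at x)) \<Longrightarrow>
   (\<forall>v. smooth_on S (\<lambda>x. frechet_derivative f (at x) v)) \<Longrightarrow> smooth_on S f"

text \<open>A (0,2)-tensor field on R^n: at each point p, tau p is a bilinear form.\<close>
type_synonym 'n tensor02 = "real^'n \<Rightarrow> real^'n \<Rightarrow> real^'n \<Rightarrow> real"

definition rdist :: "real^'n \<Rightarrow> real^'n \<Rightarrow> real" where
  "rdist x y = norm (x - y)"

definition Ndir :: "real^'n \<Rightarrow> real^'n \<Rightarrow> real^'n" where
  "Ndir x y = (1 / norm (y - x)) *\<^sub>R (y - x)"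

definition theta :: "real \<Rightarrow> real^'n \<Rightarrow> real^'n \<Rightarrow> real^'n" where
  "theta s x y = x + s *\<^sub>R Ndir x y"

definition Etau :: "'n tensor02 \<Rightarrow> real^'n \<Rightarrow> real^'n \<Rightarrow> real" where
  "Etau \<tau> x y = integral {0..rdist x y} (\<lambda>s. \<tau> (theta s x y) (Ndir x y) (Ndir x y))"

text \<open>Covariant derivative (flat Levi-Civita connection of R^n) of a (0,2)-tensor field
  in direction u: componentwise directional derivative.\<close>
definition cov_deriv :: "real^'n \<Rightarrow> 'n tensor02 \<Rightarrow> 'n tensor02" where
  "cov_deriv u \<tau> = (\<lambda>p v w. frechet_derivative (\<lambda>q. \<tau> q v w) (at p) u)"

end

theory Submission
  imports Defs
begin

(* Rescaling [0, |y_t - x_t|] to the fixed interval [0, r], r = |y0 - x0|, gives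
     E_tau(x0 + t v, y0 - t v) = 1 / (r |D_t|) * int_0^r tau(theta s + t (1 - 2 s / r) v)(D_t, D_t) ds
   with D_t = r N - 2 t v.  Expanding the bilinear form in t and differentiating under the
   integral sign gives, for every direction v, the derivative
     E_{nabla_v tau} - 2 / r * int_0^r (s tau_{NN;v} + 2 tau(v, N)) ds + 2 (v . N) / r * E_tau.
   For v orthogonal to N the last term vanishes; for v = N the integrand s tau_{NN;N} + tau_{NN}
   is the derivative of s tau_{NN}(theta s), which integrates to r tau_{NN}(y0). *)

lemma smooth_on_differentiable: "smooth_on S f \<Longrightarrow> x \<in> S \<Longrightarrow> f differentiable (at x)"
  by (erule smooth_on.cases) auto

lemma smooth_on_directional_derivative:
  "smooth_on S f \<Longrightarrow> smooth_on S (\<lambda>x. frechet_derivative f (at x) v)"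
  by (erule smooth_on.cases) auto

lemma smooth_on_imp_continuous_on: "smooth_on S f \<Longrightarrow> continuous_on S f"
  by (meson differentiable_at_withinI differentiable_imp_continuous_on differentiable_on_def
      smooth_on_differentiable)

lemma integral_rescale_interval:
  fixes f :: "real \<Rightarrow> real"
  assumes "a > 0" "b > 0"
  shows "integral {0..a} f = a / b * integral {0..b} (\<lambda>s. f (a / b * s))"
proof -
  have "(\<lambda>x. x / (a / b)) ` {0..a} = {0..b}"
    using assms by (auto simp: image_iff field_simps intro!: bexI[where x="a / b * _"])
  then show ?thesis
    using integral_stretch_real[of "a / b" 0 a f] assms by simp
qed

lemma integral_linear_weight_split:
  fixes C T :: "real \<Rightarrow> real"
  assumes "continuous_on {0..r} C" "continuous_on {0..r} T" "r \<noteq> 0"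
  shows "integral {0..r} (\<lambda>s. (1 - 2 * s / r) * C s) - 4 / r * integral {0..r} T
    = integral {0..r} C - 2 / r * integral {0..r} (\<lambda>s. s * C s + 2 * T s)"
proof -
  have C: "C integrable_on {0..r}" and sC: "(\<lambda>s. s * C s) integrable_on {0..r}"
    and T: "T integrable_on {0..r}"
    using assms by (auto intro!: integrable_continuous_interval continuous_intros)
  have "integral {0..r} (\<lambda>s. (1 - 2 * s / r) * C s) = integral {0..r} (\<lambda>s. C s - 2 / r * (s * C s))"
    by (rule integral_cong) (simp add: algebra_simps)
  also have "\<dots> = integral {0..r} C - 2 / r * integral {0..r} (\<lambda>s. s * C s)"
    by (simp only: integral_diff[OF C integrable_on_mult_right[OF sC]] integral_mult_right)
  moreover have "integral {0..r} (\<lambda>s. s * C s + 2 * T s)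
      = integral {0..r} (\<lambda>s. s * C s) + 2 * integral {0..r} T"
    using sC T by (simp add: integral_add integrable_on_mult_right)
  ultimately show ?thesis
    using assms(3) by (simp add: field_simps)
qed

lemma has_real_derivative_norm_opposite_shift:
  fixes N v :: "'a::real_inner"
  assumes "r > 0" "norm N = 1"
  shows "((\<lambda>t. norm (r *\<^sub>R N - (2 * t) *\<^sub>R v)) has_real_derivative - 2 * (v \<bullet> N)) (at 0)"
proof -
  have "(\<lambda>t. norm (r *\<^sub>R N - (2 * t) *\<^sub>R v))
      = (\<lambda>t. sqrt (r\<^sup>2 - 4 * r * t * (v \<bullet> N) + 4 * t\<^sup>2 * (v \<bullet> v)))"
    unfolding norm_eq_sqrt_inner using assms(2)[unfolded norm_eq_1]
    by (simp add: inner_diff_left inner_diff_right inner_commute power2_eq_square algebra_simps)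
  then show ?thesis
    using assms(1) by (auto intro!: derivative_eq_intros simp: power2_eq_square)
qed

lemma theta_eq: "x \<noteq> y \<Longrightarrow> theta s x y = x + (s / rdist x y) *\<^sub>R (y - x)"
  by (simp add: theta_def Ndir_def rdist_def norm_minus_commute)

lemma Ndir_scaled: "x \<noteq> y \<Longrightarrow> y - x = rdist x y *\<^sub>R Ndir x y"
  by (simp add: Ndir_def rdist_def norm_minus_commute)

lemma rdist_pos: "x \<noteq> y \<Longrightarrow> rdist x y > 0"
  by (simp add: rdist_def)

lemma norm_Ndir: "x \<noteq> y \<Longrightarrow> norm (Ndir x y) = 1"
  by (simp add: Ndir_def)

lemma theta_rdist: "x \<noteq> y \<Longrightarrow> theta (rdist x y) x y = y"
  using rdist_pos[of x y] by (simp add: theta_eq)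

lemma Etau_rescaled:
  assumes "x \<noteq> y" "b > 0"
  shows "Etau \<tau> x y
    = rdist x y / b * integral {0..b} (\<lambda>s. \<tau> (x + (s / b) *\<^sub>R (y - x)) (Ndir x y) (Ndir x y))"
  using integral_rescale_interval[OF rdist_pos[OF assms(1)] assms(2)] rdist_pos[OF assms(1)]
  by (simp add: Etau_def theta_eq[OF assms(1)])

lemma continuous_on_theta: "continuous_on S (\<lambda>s. theta s x y)"
  unfolding theta_def by (intro continuous_intros)

locale smooth_symmetric_tensor_field =
  fixes \<Omega> :: "(real^'n) set" and \<tau> :: "'n tensor02"
  assumes open_domain: "open \<Omega>" and convex_domain: "convex \<Omega>"
    and bilinear_tensor: "\<And>p. p \<in> \<Omega> \<Longrightarrow> bilinear (\<tau> p)"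
    and symmetric_tensor: "\<And>p v w. p \<in> \<Omega> \<Longrightarrow> \<tau> p v w = \<tau> p w v"
    and smooth_components: "\<And>v w. smooth_on \<Omega> (\<lambda>p. \<tau> p v w)"
begin

lemma has_derivative_tensor:
  "p \<in> \<Omega> \<Longrightarrow> ((\<lambda>q. \<tau> q a b) has_derivative (\<lambda>w. cov_deriv w \<tau> p a b)) (at p)"
  unfolding cov_deriv_def
  using smooth_on_differentiable[OF smooth_components] frechet_derivative_works by blast

lemma cov_deriv_scaleR: "p \<in> \<Omega> \<Longrightarrow> cov_deriv (c *\<^sub>R w) \<tau> p a b = c * cov_deriv w \<tau> p a b"
  using linear.scaleR[OF has_derivative_linear[OF has_derivative_tensor]] by simp

lemma continuous_on_tensor: "continuous_on \<Omega> (\<lambda>p. \<tau> p a b)"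
  by (rule smooth_on_imp_continuous_on[OF smooth_components])

lemma continuous_on_cov_deriv: "continuous_on \<Omega> (\<lambda>p. cov_deriv w \<tau> p a b)"
  unfolding cov_deriv_def
  by (rule smooth_on_imp_continuous_on[OF smooth_on_directional_derivative[OF smooth_components]])

lemma tensor_chain_rule:
  assumes "\<gamma> t \<in> \<Omega>" and "(\<gamma> has_vector_derivative \<gamma>') (at t within S)"
  shows "((\<lambda>t. \<tau> (\<gamma> t) a b) has_real_derivative cov_deriv \<gamma>' \<tau> (\<gamma> t) a b) (at t within S)"
  using vector_derivative_diff_chain_within[OF assms(2)
      has_derivative_at_withinI[OF has_derivative_tensor[OF assms(1)]]]
  unfolding has_real_derivative_iff_has_vector_derivative o_def .

lemma tensor_scaleR_both: "p \<in> \<Omega> \<Longrightarrow> \<tau> p (c *\<^sub>R a) (c *\<^sub>R b) = c\<^sup>2 * \<tau> p a b"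
  using bilinear_tensor
  by (simp add: bilinear_lmul bilinear_rmul power2_eq_square)

lemma tensor_diff_square:
  assumes "p \<in> \<Omega>"
  shows "\<tau> p (c *\<^sub>R a - d *\<^sub>R b) (c *\<^sub>R a - d *\<^sub>R b)
    = c\<^sup>2 * \<tau> p a a - 2 * c * d * \<tau> p b a + d\<^sup>2 * \<tau> p b b"
  using bilinear_tensor[OF assms] symmetric_tensor[OF assms, of a b]
  by (simp add: bilinear_lsub bilinear_rsub bilinear_lmul bilinear_rmul power2_eq_square
      algebra_simps)

lemma continuous_on_tensor_along:
  "continuous_on S q \<Longrightarrow> q ` S \<subseteq> \<Omega> \<Longrightarrow> continuous_on S (\<lambda>s. \<tau> (q s) a b)"
  by (rule continuous_on_compose2[OF continuous_on_tensor])

lemma continuous_on_cov_deriv_along: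
  "continuous_on S q \<Longrightarrow> q ` S \<subseteq> \<Omega> \<Longrightarrow> continuous_on S (\<lambda>s. cov_deriv w \<tau> (q s) a b)"
  by (rule continuous_on_compose2[OF continuous_on_cov_deriv])

lemma has_real_derivative_integral_tensor_shift:
  fixes c d :: real
  assumes p: "continuous_on {c..d} p" and \<phi>: "continuous_on {c..d} \<phi>" and "\<delta> > 0"
    and in_domain: "\<And>t s. \<bar>t\<bar> \<le> \<delta> \<Longrightarrow> s \<in> {c..d} \<Longrightarrow> p s + (t * \<phi> s) *\<^sub>R v \<in> \<Omega>"
  shows "((\<lambda>t. integral {c..d} (\<lambda>s. \<tau> (p s + (t * \<phi> s) *\<^sub>R v) a b)) has_real_derivative
           integral {c..d} (\<lambda>s. \<phi> s * cov_deriv v \<tau> (p s) a b)) (at 0)"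
proof -
  define U where "U = {-\<delta>..\<delta>}"
  define Q where "Q t s = p s + (t * \<phi> s) *\<^sub>R v" for t s
  have Q_in: "Q t s \<in> \<Omega>" if "t \<in> U" "s \<in> {c..d}" for t s
    using in_domain that by (auto simp: Q_def U_def)
  have Q_deriv: "((\<lambda>t. Q t s) has_vector_derivative \<phi> s *\<^sub>R v) (at t within U)" for t s
    unfolding Q_def has_vector_derivative_def by (auto intro!: derivative_eq_intros)
  have deriv: "((\<lambda>t. \<tau> (Q t s) a b) has_real_derivative \<phi> s * cov_deriv v \<tau> (Q t s) a b)
      (at t within U)" if "t \<in> U" "s \<in> {c..d}" for t s
    using tensor_chain_rule[OF Q_in[OF that] Q_deriv] cov_deriv_scaleR[OF Q_in[OF that]] by simp
  have "continuous_on (U \<times> {c..d}) (\<lambda>z. Q (fst z) (snd z))"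
    unfolding Q_def
    by (intro continuous_intros continuous_on_compose2[OF p] continuous_on_compose2[OF \<phi>]) auto
  then have "continuous_on (U \<times> {c..d}) (\<lambda>(t, s). \<phi> s * cov_deriv v \<tau> (Q t s) a b)"
    unfolding split_beta using Q_in
    by (intro continuous_intros continuous_on_compose2[OF \<phi>] continuous_on_cov_deriv_along) auto
  moreover have "(\<lambda>s. \<tau> (Q t s) a b) integrable_on {c..d}" if "t \<in> U" for t
    unfolding Q_def
    by (intro integrable_continuous_interval continuous_on_tensor_along continuous_intros p \<phi>)
      (use in_domain that in \<open>auto simp: U_def\<close>)
  ultimately have "((\<lambda>t. integral (cbox c d) (\<lambda>s. \<tau> (Q t s) a b)) has_real_derivative
      integral (cbox c d) (\<lambda>s. \<phi> s * cov_deriv v \<tau> (Q 0 s) a b)) (at 0 within U)"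
    using \<open>\<delta> > 0\<close> by (intro leibniz_rule_field_derivative deriv) (auto simp: U_def box_real)
  moreover have "at 0 within U = at 0"
    using \<open>\<delta> > 0\<close> by (intro at_within_interior) (simp add: U_def)
  ultimately show ?thesis
    by (simp add: Q_def box_real)
qed

lemma opposite_shift_in_domain:
  assumes "x + t *\<^sub>R v \<in> \<Omega>" "y - t *\<^sub>R v \<in> \<Omega>" "x \<noteq> y" "s \<in> {0..rdist x y}"
  shows "theta s x y + (t * (1 - 2 * s / rdist x y)) *\<^sub>R v \<in> \<Omega>"
proof -
  define u where "u = s / rdist x y"
  have "u \<in> {0..1}"
    using assms(4) rdist_pos[OF assms(3)] by (auto simp: u_def field_simps)
  moreover have "theta s x y + (t * (1 - 2 * s / rdist x y)) *\<^sub>R v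
      = (1 - u) *\<^sub>R (x + t *\<^sub>R v) + u *\<^sub>R (y - t *\<^sub>R v)"
    by (simp add: theta_eq[OF assms(3)] u_def vec_eq_iff algebra_simps)
  ultimately show ?thesis
    using assms(1,2) convex_domain by (auto simp: convex_alt)
qed

lemma theta_in_domain:
  assumes "x \<in> \<Omega>" "y \<in> \<Omega>" "x \<noteq> y" "s \<in> {0..rdist x y}"
  shows "theta s x y \<in> \<Omega>"
  using opposite_shift_in_domain[of x 0 0 y s] assms by simp

lemma Etau_opposite_shift:
  assumes x: "x + t *\<^sub>R v \<in> \<Omega>" and y: "y - t *\<^sub>R v \<in> \<Omega>"
    and shifted_neq: "x + t *\<^sub>R v \<noteq> y - t *\<^sub>R v" and neq: "x \<noteq> y"
  defines "r \<equiv> rdist x y" and "N \<equiv> Ndir x y"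
  defines "I \<equiv> \<lambda>a b. integral {0..r} (\<lambda>s. \<tau> (theta s x y + (t * (1 - 2 * s / r)) *\<^sub>R v) a b)"
  shows "Etau \<tau> (x + t *\<^sub>R v) (y - t *\<^sub>R v)
    = (r\<^sup>2 * I N N - 4 * r * t * I v N + 4 * t\<^sup>2 * I v v) / (r * norm (r *\<^sub>R N - (2 * t) *\<^sub>R v))"
proof -
  define Q where "Q s = theta s x y + (t * (1 - 2 * s / r)) *\<^sub>R v" for s
  define D where "D = r *\<^sub>R N - (2 * t) *\<^sub>R v"
  define R where "R = norm D"
  have r: "r > 0" using rdist_pos[OF neq] by (simp add: r_def)
  have D: "(y - t *\<^sub>R v) - (x + t *\<^sub>R v) = D"
    using Ndir_scaled[OF neq] by (simp add: D_def r_def N_def vec_eq_iff algebra_simps)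
  have R: "rdist (x + t *\<^sub>R v) (y - t *\<^sub>R v) = R"
    unfolding rdist_def R_def D[symmetric] by (rule norm_minus_commute)
  have R_pos: "R > 0"
    using rdist_pos[OF shifted_neq] R by simp
  have Q_in: "Q s \<in> \<Omega>" if "s \<in> {0..r}" for s
    using opposite_shift_in_domain[OF x y neq] that by (simp add: Q_def r_def)
  have "x + t *\<^sub>R v + (s / r) *\<^sub>R D = Q s" for s
    using r by (simp add: Q_def theta_def N_def[symmetric] D_def vec_eq_iff algebra_simps)
  then have "Etau \<tau> (x + t *\<^sub>R v) (y - t *\<^sub>R v)
      = R / r * integral {0..r} (\<lambda>s. \<tau> (Q s) ((1 / R) *\<^sub>R D) ((1 / R) *\<^sub>R D))"
    using Etau_rescaled[OF shifted_neq r] by (simp add: D R Ndir_def rdist_def[symmetric] R_def)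
  also have "\<dots> = R / r * integral {0..r} (\<lambda>s. (1 / R)\<^sup>2 *
      (r\<^sup>2 * \<tau> (Q s) N N - 4 * r * t * \<tau> (Q s) v N + 4 * t\<^sup>2 * \<tau> (Q s) v v))"
    by (intro arg_cong[where f="\<lambda>z. R / r * z"] integral_cong)
      (simp add: Q_in tensor_scaleR_both tensor_diff_square D_def power_mult_distrib)
  also have "integral {0..r} (\<lambda>s. (1 / R)\<^sup>2 *
      (r\<^sup>2 * \<tau> (Q s) N N - 4 * r * t * \<tau> (Q s) v N + 4 * t\<^sup>2 * \<tau> (Q s) v v))
    = (1 / R)\<^sup>2 * (r\<^sup>2 * I N N - 4 * r * t * I v N + 4 * t\<^sup>2 * I v v)"
  proof -
    have "(\<lambda>s. \<tau> (Q s) a b) integrable_on {0..r}" for a b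
      using Q_in r unfolding Q_def
      by (intro integrable_continuous_interval continuous_on_tensor_along)
        (auto simp: theta_def intro!: continuous_intros)
    then show ?thesis
      by (simp add: I_def Q_def[symmetric] integral_diff integral_add integral_mult_right
          integrable_diff integrable_add integrable_on_mult_right)
  qed
  also have "R / r * ((1 / R)\<^sup>2 * (r\<^sup>2 * I N N - 4 * r * t * I v N + 4 * t\<^sup>2 * I v v))
      = (r\<^sup>2 * I N N - 4 * r * t * I v N + 4 * t\<^sup>2 * I v v) / (r * R)"
    using R_pos by (simp add: power2_eq_square)
  finally show ?thesis
    unfolding R_def D_def .
qed

lemma small_opposite_shifts:
  assumes "x \<in> \<Omega>" "y \<in> \<Omega>" "x \<noteq> y"
  obtains \<delta> where "\<delta> > 0"
    and "\<And>t. \<bar>t\<bar> \<le> \<delta> \<Longrightarrow> x + t *\<^sub>R v \<in> \<Omega> \<and> y - t *\<^sub>R v \<in> \<Omega> \<and> x + t *\<^sub>R v \<noteq> y - t *\<^sub>R v"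
proof -
  have lim_x: "((\<lambda>t. x + t *\<^sub>R v) \<longlongrightarrow> x) (nhds 0)"
    and lim_y: "((\<lambda>t. y - t *\<^sub>R v) \<longlongrightarrow> y) (nhds 0)"
    by (auto intro!: tendsto_eq_intros filterlim_ident)
  have "\<forall>\<^sub>F t in nhds 0. (x + t *\<^sub>R v) - (y - t *\<^sub>R v) \<noteq> 0"
    using assms(3) by (intro tendsto_imp_eventually_ne[OF tendsto_diff[OF lim_x lim_y]]) simp
  then have "\<forall>\<^sub>F t in nhds 0. x + t *\<^sub>R v \<in> \<Omega> \<and> y - t *\<^sub>R v \<in> \<Omega> \<and> x + t *\<^sub>R v \<noteq> y - t *\<^sub>R v"
    using topological_tendstoD[OF lim_x open_domain assms(1)]
      topological_tendstoD[OF lim_y open_domain assms(2)]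
    by eventually_elim auto
  then obtain e where "e > 0"
    and "\<And>t. dist t 0 < e \<Longrightarrow> x + t *\<^sub>R v \<in> \<Omega> \<and> y - t *\<^sub>R v \<in> \<Omega> \<and> x + t *\<^sub>R v \<noteq> y - t *\<^sub>R v"
    unfolding eventually_nhds_metric by blast
  then show ?thesis
    by (intro that[of "e / 2"]) auto
qed

lemma has_real_derivative_Etau_opposite_shift_weighted:
  assumes x: "x \<in> \<Omega>" and y: "y \<in> \<Omega>" and neq: "x \<noteq> y"
  defines "r \<equiv> rdist x y" and "N \<equiv> Ndir x y"
  shows "((\<lambda>t. Etau \<tau> (x + t *\<^sub>R v) (y - t *\<^sub>R v)) has_real_derivative
      integral {0..r} (\<lambda>s. (1 - 2 * s / r) * cov_deriv v \<tau> (theta s x y) N N)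
      - 4 / r * integral {0..r} (\<lambda>s. \<tau> (theta s x y) v N) + 2 * (v \<bullet> N) / r * Etau \<tau> x y) (at 0)"
proof -
  have r: "r > 0" using rdist_pos[OF neq] by (simp add: r_def)
  obtain \<delta> where "\<delta> > 0" and shifts: "\<And>t. \<bar>t\<bar> \<le> \<delta> \<Longrightarrow>
      x + t *\<^sub>R v \<in> \<Omega> \<and> y - t *\<^sub>R v \<in> \<Omega> \<and> x + t *\<^sub>R v \<noteq> y - t *\<^sub>R v"
    using small_opposite_shifts[OF x y neq] by blast
  define I where "I a b t = integral {0..r} (\<lambda>s. \<tau> (theta s x y + (t * (1 - 2 * s / r)) *\<^sub>R v) a b)"
    for a b t
  define R where "R t = norm (r *\<^sub>R N - (2 * t) *\<^sub>R v)" for t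
  define I_NN' where "I_NN' = integral {0..r} (\<lambda>s. (1 - 2 * s / r) * cov_deriv v \<tau> (theta s x y) N N)"
  have I_deriv: "(I a b has_real_derivative
      integral {0..r} (\<lambda>s. (1 - 2 * s / r) * cov_deriv v \<tau> (theta s x y) a b)) (at 0)" for a b
    unfolding I_def[abs_def] using r shifts opposite_shift_in_domain[OF _ _ neq]
    by (intro has_real_derivative_integral_tensor_shift[OF continuous_on_theta _ \<open>\<delta> > 0\<close>])
      (auto intro!: continuous_intros simp: r_def)
  have norm_N: "norm N = 1"
    using norm_Ndir[OF neq] by (simp add: N_def)
  have R0: "R 0 = r"
    using norm_N r by (simp add: R_def)
  have R_deriv: "(R has_real_derivative - 2 * (v \<bullet> N)) (at 0)"
    unfolding R_def[abs_def] using has_real_derivative_norm_opposite_shift[OF r norm_N] .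
  have "((\<lambda>t. (r\<^sup>2 * I N N t - 4 * r * t * I v N t + 4 * t\<^sup>2 * I v v t) / (r * R t))
      has_real_derivative I_NN' - 4 / r * I v N 0 + 2 * (v \<bullet> N) / r * I N N 0) (at 0)"
    apply (rule derivative_eq_intros I_deriv R_deriv refl)+
    using r apply (simp_all add: R0 I_NN'_def[symmetric])
    by (simp add: divide_simps power2_eq_square algebra_simps)
  then have "((\<lambda>t. Etau \<tau> (x + t *\<^sub>R v) (y - t *\<^sub>R v)) has_real_derivative
      I_NN' - 4 / r * I v N 0 + 2 * (v \<bullet> N) / r * I N N 0) (at 0)"
  proof (rule has_field_derivative_transform_within_open[where S = "{-\<delta><..<\<delta>}"])
    fix t :: real assume "t \<in> {-\<delta><..<\<delta>}"
    then show "(r\<^sup>2 * I N N t - 4 * r * t * I v N t + 4 * t\<^sup>2 * I v v t) / (r * R t)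
        = Etau \<tau> (x + t *\<^sub>R v) (y - t *\<^sub>R v)"
      using Etau_opposite_shift[OF _ _ _ neq, of t v] shifts[of t]
      unfolding I_def R_def r_def N_def by auto
  qed (use \<open>\<delta> > 0\<close> in auto)
  moreover have "I v N 0 = integral {0..r} (\<lambda>s. \<tau> (theta s x y) v N)" "I N N 0 = Etau \<tau> x y"
    by (simp_all add: I_def Etau_def r_def N_def)
  ultimately show ?thesis
    by (simp add: I_NN'_def)
qed

lemma has_real_derivative_Etau_opposite_shift:
  assumes x: "x \<in> \<Omega>" and y: "y \<in> \<Omega>" and neq: "x \<noteq> y"
  defines "r \<equiv> rdist x y" and "N \<equiv> Ndir x y"
  shows "((\<lambda>t. Etau \<tau> (x + t *\<^sub>R v) (y - t *\<^sub>R v)) has_real_derivative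
      Etau (cov_deriv v \<tau>) x y
      - 2 / r * integral {0..r} (\<lambda>s. s * cov_deriv v \<tau> (theta s x y) N N + 2 * \<tau> (theta s x y) v N)
      + 2 * (v \<bullet> N) / r * Etau \<tau> x y) (at 0)"
proof -
  have "continuous_on {0..r} (\<lambda>s. cov_deriv v \<tau> (theta s x y) N N)"
    "continuous_on {0..r} (\<lambda>s. \<tau> (theta s x y) v N)"
    using theta_in_domain[OF x y neq]
    by (auto simp: r_def intro!: continuous_on_cov_deriv_along continuous_on_tensor_along
        continuous_on_theta)
  from integral_linear_weight_split[OF this] rdist_pos[OF neq]
    has_real_derivative_Etau_opposite_shift_weighted[OF x y neq, of v]
  show ?thesis
    by (simp add: Etau_def r_def N_def)
qed

lemma has_real_derivative_Etau_orthogonal_shift: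
  assumes "x \<in> \<Omega>" "y \<in> \<Omega>" "x \<noteq> y" "v \<bullet> Ndir x y = 0"
  shows "((\<lambda>t. Etau \<tau> (x + t *\<^sub>R v) (y - t *\<^sub>R v)) has_real_derivative
      Etau (cov_deriv v \<tau>) x y - 2 / rdist x y * integral {0..rdist x y}
        (\<lambda>s. s * cov_deriv v \<tau> (theta s x y) (Ndir x y) (Ndir x y)
             + 2 * \<tau> (theta s x y) v (Ndir x y))) (at 0)"
  using has_real_derivative_Etau_opposite_shift[OF assms(1-3), of v] assms(4) by simp

lemma has_real_derivative_Etau_normal_shift:
  assumes x: "x \<in> \<Omega>" and y: "y \<in> \<Omega>" and neq: "x \<noteq> y"
  defines "N \<equiv> Ndir x y"
  shows "((\<lambda>t. Etau \<tau> (x + t *\<^sub>R N) (y - t *\<^sub>R N)) has_real_derivative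
      Etau (cov_deriv N \<tau>) x y - 2 * \<tau> y N N) (at 0)"
proof -
  define r where "r = rdist x y"
  define f where "f s = \<tau> (theta s x y) N N" for s
  define f' where "f' s = cov_deriv N \<tau> (theta s x y) N N" for s
  have r: "r > 0" using rdist_pos[OF neq] by (simp add: r_def)
  have theta_in: "theta s x y \<in> \<Omega>" if "s \<in> {0..r}" for s
    using theta_in_domain[OF x y neq] that by (simp add: r_def)
  have "((\<lambda>s. s * f s) has_vector_derivative f s + s * f' s) (at s within {0..r})"
    if "s \<in> {0..r}" for s
  proof -
    have "((\<lambda>s. theta s x y) has_vector_derivative N) (at s within {0..r})"
      unfolding theta_def N_def has_vector_derivative_def by (auto intro!: derivative_eq_intros)
    from tensor_chain_rule[OF theta_in[OF that] this] show ?thesis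
      unfolding f_def f'_def has_real_derivative_iff_has_vector_derivative[symmetric]
      by (auto intro!: derivative_eq_intros)
  qed
  then have ftc: "((\<lambda>s. s * f' s + f s) has_integral r * f r) {0..r}"
    using fundamental_theorem_of_calculus[of 0 r "\<lambda>s. s * f s"] r by (simp add: add.commute)
  have "f integrable_on {0..r}"
    unfolding f_def using theta_in
    by (intro integrable_continuous_interval continuous_on_tensor_along continuous_on_theta) auto
  then have "integral {0..r} (\<lambda>s. (s * f' s + f s) + f s) = r * f r + integral {0..r} f"
    by (simp only: integral_add[OF has_integral_integrable[OF ftc]] integral_unique[OF ftc])
  moreover have "(\<lambda>s. (s * f' s + f s) + f s) = (\<lambda>s. s * f' s + 2 * f s)"
    by (simp add: fun_eq_iff)
  moreover have "integral {0..r} f = Etau \<tau> x y" "f r = \<tau> y N N" "N \<bullet> N = 1"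
    using theta_rdist[OF neq] norm_Ndir[OF neq]
    by (simp_all add: f_def[abs_def] Etau_def r_def N_def norm_eq_1)
  moreover have "((\<lambda>t. Etau \<tau> (x + t *\<^sub>R N) (y - t *\<^sub>R N)) has_real_derivative
      Etau (cov_deriv N \<tau>) x y - 2 / r * integral {0..r} (\<lambda>s. s * f' s + 2 * f s)
      + 2 * (N \<bullet> N) / r * Etau \<tau> x y) (at 0)"
    unfolding f_def f'_def r_def N_def by (rule has_real_derivative_Etau_opposite_shift[OF x y neq])
  moreover have "E' - 2 / r * (r * F + E) + 2 * 1 / r * E = E' - 2 * F" for E' E F
    using r by (simp add: field_simps)
  ultimately show ?thesis
    by (simp only:)
qed

end

theorem theorem2p3:
  fixes \<Omega> :: "(real^'n) set" and \<tau> :: "'n tensor02"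
    and x0 y0 :: "real^'n" and e :: "nat \<Rightarrow> real^'n"
  defines "n \<equiv> CARD('n)"
  assumes open_\<Omega>: "open \<Omega>" and conn: "connected \<Omega>" and conv: "convex \<Omega>"
    and bil: "\<forall>p\<in>\<Omega>. bilinear (\<tau> p)"
    and sym: "\<forall>p\<in>\<Omega>. \<forall>v w. \<tau> p v w = \<tau> p w v"
    and smooth: "\<forall>v w. smooth_on \<Omega> (\<lambda>p. \<tau> p v w)"
    and x0: "x0 \<in> \<Omega>" and y0: "y0 \<in> \<Omega>" and neq: "x0 \<noteq> y0"
    and orthonormal: "\<forall>i\<in>{1..n}. \<forall>j\<in>{1..n}. e i \<bullet> e j = (if i = j then 1 else 0)"
    and en: "e n = Ndir x0 y0"
  shows "(\<forall>i\<in>{1..<n}.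
           ((\<lambda>t. Etau \<tau> (x0 + t *\<^sub>R e i) (y0 - t *\<^sub>R e i)) has_real_derivative
              (Etau (cov_deriv (e i) \<tau>) x0 y0
               - 2 / rdist x0 y0 * integral {0..rdist x0 y0}
                   (\<lambda>s. s * cov_deriv (e i) \<tau> (theta s x0 y0) (e n) (e n)
                        + 2 * \<tau> (theta s x0 y0) (e i) (e n)))) (at 0))
       \<and> ((\<lambda>t. Etau \<tau> (x0 + t *\<^sub>R e n) (y0 - t *\<^sub>R e n)) has_real_derivative
              (Etau (cov_deriv (e n) \<tau>) x0 y0 - 2 * \<tau> y0 (e n) (e n))) (at 0)"
proof -
  interpret smooth_symmetric_tensor_field \<Omega> \<tau>
    using open_\<Omega> conv bil sym smooth by unfold_locales auto
  have "1 \<le> n"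
    unfolding n_def by (simp add: Suc_leI)
  then have "e i \<bullet> Ndir x0 y0 = 0" if "i \<in> {1..<n}" for i
    using orthonormal that unfolding en[symmetric] by auto
  then show ?thesis
    using has_real_derivative_Etau_orthogonal_shift[OF x0 y0 neq]
      has_real_derivative_Etau_normal_shift[OF x0 y0 neq]
    unfolding en by auto
qed

end
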